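(* Let $D$ be a positive integer that is not a perfect square, let $(t_1,u_1)$ be the least strictly positive integer solution of $X^2-DY^2=1$, $\epsilon=t_1+u_1\sqrt D$, and $\epsilon^k=t_k+u_k\sqrt D$ for $k\in\mathbb{Z}$. For a positive integer $m$ let $P(m)$ be the least positive integer $P$ with $t_{k+P}\equiv t_k$ and $u_{k+P}\equiv u_k\pmod m$ for all $k$. Then for every positive integer $m$, $$P(m)\le 2m(\log m+1).$$
   Context: Logarithms: $\log x=\log_2|x|$ if $|x|\ge4$, and $\log x=2$ if $|x|<4$. *)

theory Defs
  imports Complex_Main "HOL-Number_Theory.Cong"
begin

text \<open>Paper's logarithm: log x = log_2 |x| if |x| >= 4, and 2 otherwise.\<close>
definition plog :: "real \<Rightarrow> real" where
  "plog x = (if \<bar>x\<bar> \<ge> 4 then log 2 \<bar>x\<bar> else 2)"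

text \<open>Multiplication in Z[sqrt D]: (a + b sqrt D)(c + d sqrt D).\<close>
definition qmult :: "int \<Rightarrow> int \<times> int \<Rightarrow> int \<times> int \<Rightarrow> int \<times> int" where
  "qmult D x y = (fst x * fst y + D * snd x * snd y, fst x * snd y + snd x * fst y)"

fun qpow_nat :: "int \<Rightarrow> int \<times> int \<Rightarrow> nat \<Rightarrow> int \<times> int" where
  "qpow_nat D x 0 = (1, 0)"
| "qpow_nat D x (Suc n) = qmult D x (qpow_nat D x n)"

text \<open>(t_k, u_k) with eps^k = t_k + u_k sqrt D for k in Z, where eps = t1 + u1 sqrt D.
  Since t1^2 - D u1^2 = 1, eps^(-1) = t1 - u1 sqrt D.\<close>
definition pell_tu :: "int \<Rightarrow> int \<Rightarrow> int \<Rightarrow> int \<Rightarrow> int \<times> int" where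
  "pell_tu D t1 u1 k =
     (if k \<ge> 0 then qpow_nat D (t1, u1) (nat k) else qpow_nat D (t1, - u1) (nat (- k)))"

definition pell_period :: "int \<Rightarrow> int \<Rightarrow> int \<Rightarrow> int \<Rightarrow> nat" where
  "pell_period D t1 u1 m =
     (LEAST P::nat. P > 0 \<and> (\<forall>k::int.
        [fst (pell_tu D t1 u1 (k + int P)) = fst (pell_tu D t1 u1 k)] (mod m) \<and>
        [snd (pell_tu D t1 u1 (k + int P)) = snd (pell_tu D t1 u1 k)] (mod m)))"

end

theory Submission
  imports Defs "HOL-Number_Theory.Euler_Criterion" "HOL-Computational_Algebra.Nth_Powers"
begin

text \<open>
  Work in the ring Z[\<surd>D], realised inside the reals, where t_k + u_k \<surd>D = \<epsilon>^k: any P > 0 with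
  \<epsilon>^P \<equiv> 1 (mod m) in Z[\<surd>D] is a period of both sequences modulo m. Since
  \<epsilon>^2 - 1 = 2 u_1 \<surd>D \<epsilon>, the exponent 2 works for p = 2, and 2p works for a prime p dividing D.
  For an odd prime p not dividing D, the Frobenius congruence, Fermat's little theorem and
  Euler's criterion give \<epsilon>^p \<equiv> \<epsilon> or \<epsilon>^p \<equiv> \<epsilon>' = 1/\<epsilon> (mod p), so p - 1 or p + 1 works.
  Each further power of p costs a factor p in the exponent (binomial lifting), and coprime
  moduli combine through the lcm of the exponents; as all exponents are even, the lcm is at
  most half their product. Hence P(m) \<le> 2m, which is stronger than the claimed bound.
\<close>

lemma fermat_little_int:
  assumes "prime p"
  shows "[a ^ p = a] (mod int p)"
proof (cases "int p dvd a")
  case True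
  moreover from this have "int p dvd a ^ p"
    using assms by (meson dvd_power dvd_trans prime_gt_0_nat)
  ultimately show ?thesis
    by (simp add: cong_iff_dvd_diff)
next
  case False
  have "residues (int p)"
    using assms by unfold_locales (metis of_nat_1 of_nat_less_iff prime_gt_1_nat)
  moreover have "coprime a (int p)"
    using False assms prime_imp_coprime[of "int p" a] by (simp add: coprime_commute)
  ultimately have "[a ^ (p - 1) = 1] (mod int p)"
    using residues.euler_theorem[of "int p" a] assms by (simp add: totient_prime)
  then have "[a ^ (p - 1) * a = 1 * a] (mod int p)"
    by (rule cong_mult) simp
  then show ?thesis
    using assms by (simp flip: power_Suc2 add: prime_gt_0_nat)
qed

lemma square_if_mult_square_eq_square:
  fixes D a b :: int
  assumes "D * b ^ 2 = a ^ 2" and "b \<noteq> 0"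
  shows "\<exists>r. D = r ^ 2"
proof -
  have "is_nth_power 2 (D * b ^ 2)"
    using assms(1) by simp
  then have "is_nth_power 2 D"
    using assms(2) by (simp add: is_nth_power_mult_cancel_right)
  then show ?thesis
    by (auto elim: is_nth_powerE)
qed

lemma lcm_even_le:
  fixes a b :: nat
  assumes "even a" and "even b"
  shows "2 * lcm a b \<le> a * b"
proof (cases "a = 0 \<or> b = 0")
  case True
  then show ?thesis by auto
next
  case False
  have "2 dvd gcd a b"
    using assms by (rule gcd_greatest)
  then have "2 \<le> gcd a b"
    using False by (intro dvd_imp_le) simp_all
  then have "2 * lcm a b \<le> gcd a b * lcm a b"
    by (rule mult_right_mono) simp
  also have "\<dots> = a * b"
    by (rule prod_gcd_lcm_nat[symmetric])
  finally show ?thesis .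
qed

lemma prime_power_coprime_induct [consumes 1, case_names one prime_power coprime]:
  fixes n :: nat
  assumes "n > 0"
    and "P 1"
    and "\<And>p k. prime p \<Longrightarrow> k > 0 \<Longrightarrow> P (p ^ k)"
    and "\<And>a b. coprime a b \<Longrightarrow> P a \<Longrightarrow> P b \<Longrightarrow> P (a * b)"
  shows "P n"
  using assms(1)
proof (induction n rule: less_induct)
  case (less n)
  show ?case
  proof (cases "n = 1")
    case True
    then show ?thesis using assms(2) by simp
  next
    case False
    then obtain p where p: "prime p" "p dvd n"
      using prime_factor_nat by blast
    define k where "k = multiplicity p n"
    define r where "r = n div p ^ k"
    have n: "n = p ^ k * r"
      unfolding r_def k_def by (simp add: multiplicity_dvd)
    have "\<not> p dvd r"
      unfolding r_def k_def using less.prems p(1)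
      by (intro multiplicity_decompose) (auto simp: not_prime_unit)
    then have "coprime (p ^ k) r"
      using p(1) by (simp add: prime_imp_coprime)
    have "k > 0"
      unfolding k_def using less.prems p by (simp add: prime_multiplicity_gt_zero_iff)
    then have "1 < p ^ k"
      using p(1) by (metis one_less_power prime_gt_1_nat)
    have "r > 0"
      using n less.prems by (cases "r = 0") auto
    then have "1 * r < p ^ k * r"
      using \<open>1 < p ^ k\<close> by (intro mult_strict_right_mono)
    then have "P r"
      using less.IH \<open>r > 0\<close> n by simp
    then show ?thesis
      using assms(4)[OF \<open>coprime (p ^ k) r\<close> assms(3)[OF p(1) \<open>k > 0\<close>]] n by simp
  qed
qed

lemma quadratic_ext_mult:
  fixes a b c e w :: "'a :: comm_ring"
  assumes "w * w = d"
  shows "(a + b * w) * (c + e * w) = (a * c + d * b * e) + (a * e + b * c) * w"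
  unfolding assms[symmetric] by (simp add: algebra_simps)

locale real_quadratic =
  fixes D :: int
  assumes D_pos: "D > 0" and D_nonsquare: "\<not> (\<exists>r. D = r ^ 2)"
begin

abbreviation sqrtD :: real where
  "sqrtD \<equiv> sqrt (of_int D)"

lemma sqrtD_square [simp]: "sqrtD * sqrtD = of_int D"
  using D_pos by simp

lemma sqrtD_power2 [simp]: "sqrtD ^ 2 = of_int D"
  using D_pos by simp

definition zsqrt :: "int \<times> int \<Rightarrow> real" where
  "zsqrt z = of_int (fst z) + of_int (snd z) * sqrtD"

definition Z_sqrtD :: "real set" where
  "Z_sqrtD = range zsqrt"

lemma zsqrt_eq_0_iff: "zsqrt (a, b) = 0 \<longleftrightarrow> a = 0 \<and> b = 0"
proof
  assume "zsqrt (a, b) = 0"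
  then have "of_int b * sqrtD = - of_int a"
    unfolding zsqrt_def by simp
  then have "(of_int b * sqrtD) ^ 2 = (of_int a :: real) ^ 2"
    by simp
  then have "of_int (D * b ^ 2) = (of_int (a ^ 2) :: real)"
    by (simp add: power_mult_distrib mult.commute)
  then have "D * b ^ 2 = a ^ 2"
    by (simp only: of_int_eq_iff)
  then have "b = 0"
    using D_nonsquare square_if_mult_square_eq_square by blast
  then show "a = 0 \<and> b = 0"
    using \<open>zsqrt (a, b) = 0\<close> by (simp add: zsqrt_def)
qed (simp add: zsqrt_def)

lemma zsqrt_diff: "zsqrt (a, b) - zsqrt (c, d) = zsqrt (a - c, b - d)"
  by (simp add: zsqrt_def algebra_simps)

lemma zsqrt_inject: "zsqrt x = zsqrt y \<longleftrightarrow> x = y"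
proof
  assume "zsqrt x = zsqrt y"
  then have "zsqrt (fst x - fst y, snd x - snd y) = 0"
    using zsqrt_diff[of "fst x" "snd x" "fst y" "snd y"] by simp
  then show "x = y"
    unfolding zsqrt_eq_0_iff by (simp add: prod_eq_iff)
qed simp

lemma zsqrt_mult: "zsqrt x * zsqrt y = zsqrt (qmult D x y)"
  unfolding zsqrt_def qmult_def quadratic_ext_mult[OF sqrtD_square] by simp

lemma zsqrt_qpow_nat: "zsqrt (qpow_nat D x n) = zsqrt x ^ n"
proof (induction n)
  case 0
  then show ?case by (simp add: zsqrt_def)
next
  case (Suc n)
  then show ?case by (simp flip: zsqrt_mult)
qed

lemma Z_sqrtD_iff: "x \<in> Z_sqrtD \<longleftrightarrow> (\<exists>a b. x = of_int a + of_int b * sqrtD)"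
proof
  assume "\<exists>a b. x = of_int a + of_int b * sqrtD"
  then obtain a b where "x = zsqrt (a, b)"
    unfolding zsqrt_def by auto
  then show "x \<in> Z_sqrtD"
    unfolding Z_sqrtD_def by simp
qed (auto simp: Z_sqrtD_def zsqrt_def)

lemma Z_sqrtD_of_int [simp, intro]: "of_int a \<in> Z_sqrtD"
  unfolding Z_sqrtD_iff by (rule exI[of _ a], rule exI[of _ 0]) simp

lemma Z_sqrtD_of_nat [simp, intro]: "of_nat n \<in> Z_sqrtD"
  using Z_sqrtD_of_int[of "int n"] by simp

lemma Z_sqrtD_numeral [simp, intro]: "numeral k \<in> Z_sqrtD"
  using Z_sqrtD_of_nat[of "numeral k"] by simp

lemma Z_sqrtD_1 [simp, intro]: "1 \<in> Z_sqrtD"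
  using Z_sqrtD_of_int[of 1] by simp

lemma Z_sqrtD_sqrtD [simp, intro]: "sqrtD \<in> Z_sqrtD"
  unfolding Z_sqrtD_iff by (rule exI[of _ 0], rule exI[of _ 1]) simp

lemma Z_sqrtD_add [simp, intro]:
  assumes "x \<in> Z_sqrtD" and "y \<in> Z_sqrtD"
  shows "x + y \<in> Z_sqrtD"
proof -
  obtain a b c d where "x = of_int a + of_int b * sqrtD" and "y = of_int c + of_int d * sqrtD"
    using assms unfolding Z_sqrtD_iff by blast
  then have "x + y = of_int (a + c) + of_int (b + d) * sqrtD"
    by (simp add: algebra_simps)
  then show ?thesis
    unfolding Z_sqrtD_iff by blast
qed

lemma Z_sqrtD_uminus [simp, intro]:
  assumes "x \<in> Z_sqrtD"
  shows "- x \<in> Z_sqrtD"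
proof -
  obtain a b where "x = of_int a + of_int b * sqrtD"
    using assms unfolding Z_sqrtD_iff by blast
  then have "- x = of_int (- a) + of_int (- b) * sqrtD"
    by simp
  then show ?thesis
    unfolding Z_sqrtD_iff by blast
qed

lemma Z_sqrtD_diff [simp, intro]: "x \<in> Z_sqrtD \<Longrightarrow> y \<in> Z_sqrtD \<Longrightarrow> x - y \<in> Z_sqrtD"
  using Z_sqrtD_add[of x "- y"] by simp

lemma Z_sqrtD_mult [simp, intro]: "x \<in> Z_sqrtD \<Longrightarrow> y \<in> Z_sqrtD \<Longrightarrow> x * y \<in> Z_sqrtD"
  unfolding Z_sqrtD_def by (auto simp: zsqrt_mult)

lemma Z_sqrtD_power [simp, intro]: "x \<in> Z_sqrtD \<Longrightarrow> x ^ n \<in> Z_sqrtD"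
  by (induction n) auto

definition dvd_Z :: "int \<Rightarrow> real \<Rightarrow> bool" (infix "dvd\<^sub>Z" 50) where
  "n dvd\<^sub>Z x \<longleftrightarrow> (\<exists>z\<in>Z_sqrtD. x = of_int n * z)"

lemma dvd_Z_0 [simp]: "n dvd\<^sub>Z 0"
  unfolding dvd_Z_def by (metis Z_sqrtD_of_int mult_zero_right of_int_0)

lemma dvd_Z_mult_self: "z \<in> Z_sqrtD \<Longrightarrow> n dvd\<^sub>Z of_int n * z"
  unfolding dvd_Z_def by blast

lemma dvd_Z_self: "n dvd\<^sub>Z of_int n"
  using dvd_Z_mult_self[OF Z_sqrtD_1] by simp

lemma dvd_Z_trans:
  assumes "m dvd n" and "n dvd\<^sub>Z x"
  shows "m dvd\<^sub>Z x"
proof -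
  obtain k where "n = m * k"
    using assms(1) ..
  moreover obtain z where "z \<in> Z_sqrtD" "x = of_int n * z"
    using assms(2) unfolding dvd_Z_def by blast
  ultimately have "x = of_int m * (of_int k * z)" and "of_int k * z \<in> Z_sqrtD"
    by simp_all
  then show ?thesis
    unfolding dvd_Z_def by blast
qed

lemma dvd_Z_mult:
  assumes "m dvd\<^sub>Z x" and "n dvd\<^sub>Z y"
  shows "m * n dvd\<^sub>Z x * y"
proof -
  obtain z1 z2 where "z1 \<in> Z_sqrtD" "x = of_int m * z1" "z2 \<in> Z_sqrtD" "y = of_int n * z2"
    using assms unfolding dvd_Z_def by blast
  then have "x * y = of_int (m * n) * (z1 * z2)" and "z1 * z2 \<in> Z_sqrtD"
    by (simp_all add: algebra_simps)
  then show ?thesis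
    unfolding dvd_Z_def by blast
qed

lemma dvd_Z_in_Z_sqrtD: "n dvd\<^sub>Z x \<Longrightarrow> x \<in> Z_sqrtD"
  unfolding dvd_Z_def by auto

lemma dvd_Z_add: "n dvd\<^sub>Z x \<Longrightarrow> n dvd\<^sub>Z y \<Longrightarrow> n dvd\<^sub>Z x + y"
  unfolding dvd_Z_def by (metis Z_sqrtD_add distrib_left)

lemma dvd_Z_mult_right: "n dvd\<^sub>Z x \<Longrightarrow> y \<in> Z_sqrtD \<Longrightarrow> n dvd\<^sub>Z x * y"
  unfolding dvd_Z_def by (metis Z_sqrtD_mult mult.assoc)

lemma dvd_Z_mult_left: "n dvd\<^sub>Z x \<Longrightarrow> y \<in> Z_sqrtD \<Longrightarrow> n dvd\<^sub>Z y * x"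
  using dvd_Z_mult_right by (simp add: mult.commute)

lemma dvd_Z_sum: "(\<And>i. i \<in> A \<Longrightarrow> n dvd\<^sub>Z f i) \<Longrightarrow> n dvd\<^sub>Z sum f A"
proof (induction A rule: infinite_finite_induct)
  case (infinite A)
  then show ?case by simp
next
  case empty
  then show ?case by simp
next
  case (insert i A)
  then show ?case by (simp add: dvd_Z_add)
qed

lemma dvd_Z_zsqrt_iff: "n dvd\<^sub>Z zsqrt (a, b) \<longleftrightarrow> n dvd a \<and> n dvd b"
proof
  assume "n dvd\<^sub>Z zsqrt (a, b)"
  then obtain c d where "zsqrt (a, b) = of_int n * zsqrt (c, d)"
    unfolding dvd_Z_def Z_sqrtD_def by auto
  also have "\<dots> = zsqrt (n * c, n * d)"
    by (simp add: zsqrt_def algebra_simps)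
  finally show "n dvd a \<and> n dvd b"
    unfolding zsqrt_inject by auto
next
  assume "n dvd a \<and> n dvd b"
  then obtain c d where "a = n * c" "b = n * d"
    by (auto elim!: dvdE)
  then have "zsqrt (a, b) = of_int n * zsqrt (c, d)"
    by (simp add: zsqrt_def algebra_simps)
  then show "n dvd\<^sub>Z zsqrt (a, b)"
    unfolding dvd_Z_def Z_sqrtD_def by auto
qed

lemma dvd_Z_mult_coprime:
  assumes "coprime m n" and "m dvd\<^sub>Z x" and "n dvd\<^sub>Z x"
  shows "m * n dvd\<^sub>Z x"
proof -
  obtain z where "x = zsqrt z"
    using dvd_Z_in_Z_sqrtD[OF assms(2)] unfolding Z_sqrtD_def by auto
  then show ?thesis
    using assms by (cases z) (simp add: dvd_Z_zsqrt_iff divides_mult)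
qed

lemma dvd_Z_power_sub_one:
  assumes "x \<in> Z_sqrtD" and "n dvd\<^sub>Z x - 1"
  shows "n dvd\<^sub>Z x ^ c - 1"
proof (induction c)
  case 0
  then show ?case by simp
next
  case (Suc c)
  have "x ^ Suc c - 1 = x ^ c * (x - 1) + (x ^ c - 1)"
    by (simp add: algebra_simps)
  then show ?case
    using Suc assms by (metis dvd_Z_add dvd_Z_mult_left Z_sqrtD_power)
qed

lemma one_plus_power_expansion:
  assumes "y \<in> Z_sqrtD"
  shows "\<exists>z\<in>Z_sqrtD. (1 + y) ^ s = 1 + of_nat s * y + y * y * z"
proof (induction s)
  case 0
  show ?case by (intro bexI[of _ 0]) (simp_all add: Z_sqrtD_of_int[of 0, simplified])
next
  case (Suc s)
  then obtain z where z: "z \<in> Z_sqrtD" "(1 + y) ^ s = 1 + of_nat s * y + y * y * z"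
    by blast
  then have "(1 + y) ^ Suc s = 1 + of_nat (Suc s) * y + y * y * (of_nat s + z + y * z)"
    by (simp add: algebra_simps)
  then show ?case
    using z(1) assms by blast
qed

lemma dvd_Z_power_sub_one_lift:
  assumes "x \<in> Z_sqrtD" and "n dvd\<^sub>Z of_nat s * (x - 1)" and "n dvd\<^sub>Z (x - 1) * (x - 1)"
  shows "n dvd\<^sub>Z x ^ s - 1"
proof -
  obtain z where z: "z \<in> Z_sqrtD" "(1 + (x - 1)) ^ s = 1 + of_nat s * (x - 1) + (x - 1) * (x - 1) * z"
    using one_plus_power_expansion assms(1) by blast
  then have "x ^ s - 1 = of_nat s * (x - 1) + (x - 1) * (x - 1) * z"
    by simp
  then show ?thesis
    using assms z(1) by (simp add: dvd_Z_add dvd_Z_mult_right)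
qed

lemma dvd_Z_power_lift:
  assumes "j \<ge> 1" and "x \<in> Z_sqrtD" and "int p ^ j dvd\<^sub>Z x - 1"
  shows "int p ^ (j + 1) dvd\<^sub>Z x ^ p - 1"
proof (rule dvd_Z_power_sub_one_lift[OF assms(2)])
  have "int p * int p ^ j dvd\<^sub>Z of_int (int p) * (x - 1)"
    using assms(3) by (intro dvd_Z_mult dvd_Z_self)
  then show "int p ^ (j + 1) dvd\<^sub>Z of_nat p * (x - 1)"
    by simp
  have "int p ^ (j + 1) dvd int p ^ (j + j)"
    using assms(1) by (intro le_imp_power_dvd) simp
  then have "int p ^ (j + 1) dvd int p ^ j * int p ^ j"
    by (simp only: power_add)
  moreover have "int p ^ j * int p ^ j dvd\<^sub>Z (x - 1) * (x - 1)"
    by (rule dvd_Z_mult[OF assms(3) assms(3)])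
  ultimately show "int p ^ (j + 1) dvd\<^sub>Z (x - 1) * (x - 1)"
    by (rule dvd_Z_trans)
qed

lemma dvd_Z_power_lift_iter:
  assumes "x \<in> Z_sqrtD" and "int p dvd\<^sub>Z x - 1"
  shows "int p ^ (k + 1) dvd\<^sub>Z x ^ (p ^ k) - 1"
proof (induction k)
  case 0
  then show ?case using assms by simp
next
  case (Suc k)
  have "int p ^ (k + 1 + 1) dvd\<^sub>Z (x ^ (p ^ k)) ^ p - 1"
    using assms Suc by (intro dvd_Z_power_lift) auto
  then show ?case
    by (simp add: mult.commute flip: power_mult)
qed

lemma dvd_Z_frobenius:
  assumes "prime p" and "x \<in> Z_sqrtD" and "y \<in> Z_sqrtD"
  shows "int p dvd\<^sub>Z (x + y) ^ p - x ^ p - y ^ p"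
proof -
  define f where "f k = of_nat (p choose k) * x ^ k * y ^ (p - k)" for k
  have "(x + y) ^ p = sum f {..p}"
    unfolding f_def by (rule binomial_ring)
  also have "\<dots> = f p + sum f ({..p} - {p})"
    by (rule sum.remove) auto
  also have "sum f ({..p} - {p}) = f 0 + sum f ({..p} - {p} - {0})"
    using prime_gt_0_nat[OF assms(1)] by (intro sum.remove) auto
  finally have eq: "(x + y) ^ p - x ^ p - y ^ p = sum f ({..p} - {p} - {0})"
    by (simp add: f_def)
  have "int p dvd\<^sub>Z f k" if "k \<in> {..p} - {p} - {0}" for k
  proof -
    have "p dvd p choose k"
      using that assms(1) by (intro dvd_choose_prime) auto
    then obtain c where "p choose k = p * c" ..
    then have "f k = of_int (int p) * (of_nat c * x ^ k * y ^ (p - k))"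
      unfolding f_def by simp
    moreover have "of_nat c * x ^ k * y ^ (p - k) \<in> Z_sqrtD"
      using assms(2,3) by simp
    ultimately show ?thesis
      using dvd_Z_mult_self by metis
  qed
  then show ?thesis
    unfolding eq by (rule dvd_Z_sum)
qed

end

locale pell_unit = real_quadratic +
  fixes t1 u1 :: int
  assumes pell_eq: "t1 ^ 2 - D * u1 ^ 2 = 1"
begin

definition \<epsilon> :: real where
  "\<epsilon> = zsqrt (t1, u1)"

definition \<epsilon>' :: real where
  "\<epsilon>' = zsqrt (t1, - u1)"

lemma \<epsilon>_in_Z_sqrtD [simp, intro]: "\<epsilon> \<in> Z_sqrtD"
  unfolding \<epsilon>_def Z_sqrtD_def by simp

lemma \<epsilon>'_in_Z_sqrtD [simp, intro]: "\<epsilon>' \<in> Z_sqrtD"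
  unfolding \<epsilon>'_def Z_sqrtD_def by simp

lemma \<epsilon>_mult_\<epsilon>': "\<epsilon> * \<epsilon>' = 1"
proof -
  have "qmult D (t1, u1) (t1, - u1) = (1, 0)"
    using pell_eq by (simp add: qmult_def power2_eq_square algebra_simps)
  then show ?thesis
    unfolding \<epsilon>_def \<epsilon>'_def zsqrt_mult by (simp add: zsqrt_def)
qed

lemma \<epsilon>_square_sub_one: "\<epsilon> ^ 2 - 1 = of_int (2 * u1) * sqrtD * \<epsilon>"
proof -
  have "\<epsilon> ^ 2 - 1 = \<epsilon> * (\<epsilon> - \<epsilon>')"
    using \<epsilon>_mult_\<epsilon>' by (simp add: power2_eq_square algebra_simps)
  then show ?thesis
    unfolding \<epsilon>_def \<epsilon>'_def zsqrt_def by (simp add: algebra_simps)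
qed

definition even_period_le_twice :: "nat \<Rightarrow> bool" where
  "even_period_le_twice n \<longleftrightarrow> (\<exists>P. 0 < P \<and> even P \<and> P \<le> 2 * n \<and> int n dvd\<^sub>Z \<epsilon> ^ P - 1)"

lemma even_period_le_twice_one: "even_period_le_twice 1"
  unfolding even_period_le_twice_def
  using dvd_Z_mult_self[of "\<epsilon> ^ 2 - 1" 1] by (intro exI[of _ 2]) simp

lemma even_period_le_twice_two: "even_period_le_twice 2"
proof -
  have "\<epsilon> ^ 2 - 1 = of_int 2 * (of_int u1 * sqrtD * \<epsilon>)"
    unfolding \<epsilon>_square_sub_one by simp
  then have "int 2 dvd\<^sub>Z \<epsilon> ^ 2 - 1"
    using dvd_Z_mult_self[of "of_int u1 * sqrtD * \<epsilon>" 2] by simp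
  then show ?thesis
    unfolding even_period_le_twice_def by (intro exI[of _ 2]) simp
qed

lemma even_period_le_twice_prime_dvd:
  assumes "prime p" and "int p dvd D"
  shows "even_period_le_twice p"
proof -
  have "int p dvd\<^sub>Z (\<epsilon> ^ 2) ^ p - 1"
  proof (rule dvd_Z_power_sub_one_lift)
    show "int p dvd\<^sub>Z of_nat p * (\<epsilon> ^ 2 - 1)"
      using dvd_Z_mult_self[of "\<epsilon> ^ 2 - 1" "int p"] by simp
    have "(\<epsilon> ^ 2 - 1) * (\<epsilon> ^ 2 - 1) = of_int D * (of_int (4 * u1 ^ 2) * \<epsilon> ^ 2)"
      unfolding \<epsilon>_square_sub_one using D_pos by (simp add: algebra_simps power2_eq_square)
    then have "D dvd\<^sub>Z (\<epsilon> ^ 2 - 1) * (\<epsilon> ^ 2 - 1)"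
      using dvd_Z_mult_self by simp
    then show "int p dvd\<^sub>Z (\<epsilon> ^ 2 - 1) * (\<epsilon> ^ 2 - 1)"
      using assms(2) by (rule dvd_Z_trans[rotated])
  qed simp
  then show ?thesis
    unfolding even_period_le_twice_def using prime_gt_0_nat[OF assms(1)]
    by (intro exI[of _ "2 * p"]) (simp add: power_mult)
qed

lemma \<epsilon>_power_prime_cong:
  assumes "prime p" and "odd p" and "\<not> int p dvd D"
  shows "int p dvd\<^sub>Z \<epsilon> ^ p - zsqrt (t1, Legendre D (int p) * u1)"
proof -
  define h where "h = (p - 1) div 2"
  define L where "L = Legendre D (int p)"
  have p: "p = 2 * h + 1"
    using assms(2) unfolding h_def by presburger
  have "2 < p"
    using assms(1,2) prime_ge_2_nat[OF assms(1)] by (metis le_neq_implies_less dvd_refl)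
  then have "[L = D ^ h] (mod int p)"
    unfolding L_def h_def using assms(1) by (rule euler_criterion[rotated])
  then have u: "[u1 ^ p * D ^ h = u1 * L] (mod int p)"
    using fermat_little_int[OF assms(1)] by (simp add: cong_mult cong_sym)
  have frobenius: "int p dvd\<^sub>Z \<epsilon> ^ p - of_int t1 ^ p - (of_int u1 * sqrtD) ^ p"
    unfolding \<epsilon>_def zsqrt_def fst_conv snd_conv by (rule dvd_Z_frobenius[OF assms(1)]) simp_all
  have fermat_euler: "int p dvd\<^sub>Z zsqrt (t1 ^ p - t1, u1 ^ p * D ^ h - L * u1)"
    using fermat_little_int[OF assms(1), of t1] u
    by (simp add: dvd_Z_zsqrt_iff cong_iff_dvd_diff mult.commute)
  have "sqrtD ^ p = of_int (D ^ h) * sqrtD"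
    unfolding p by (simp add: power_mult)
  then have decomposition: "\<epsilon> ^ p - zsqrt (t1, L * u1) =
      (\<epsilon> ^ p - of_int t1 ^ p - (of_int u1 * sqrtD) ^ p) + zsqrt (t1 ^ p - t1, u1 ^ p * D ^ h - L * u1)"
    by (simp add: zsqrt_def power_mult_distrib algebra_simps)
  have "int p dvd\<^sub>Z \<epsilon> ^ p - zsqrt (t1, L * u1)"
    unfolding decomposition by (rule dvd_Z_add[OF frobenius fermat_euler])
  then show ?thesis
    unfolding L_def .
qed

lemma even_period_le_twice_odd_prime:
  assumes "prime p" and "odd p" and "\<not> int p dvd D"
  shows "even_period_le_twice p"
proof -
  have "\<not> [D = 0] (mod int p)"
    using assms(3) by (simp add: cong_0_iff)
  then consider "Legendre D (int p) = 1" | "Legendre D (int p) = -1"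
    unfolding Legendre_def by (cases "QuadRes (int p) D") auto
  then show ?thesis
  proof cases
    case 1
    then have "int p dvd\<^sub>Z \<epsilon> ^ p - \<epsilon>"
      using \<epsilon>_power_prime_cong[OF assms] by (simp add: \<epsilon>_def)
    moreover have "\<epsilon> ^ (p - 1) - 1 = \<epsilon>' * (\<epsilon> ^ p - \<epsilon>)"
      using \<epsilon>_mult_\<epsilon>' prime_gt_0_nat[OF assms(1)]
      by (simp add: algebra_simps power_eq_if)
    ultimately have "int p dvd\<^sub>Z \<epsilon> ^ (p - 1) - 1"
      by (simp add: dvd_Z_mult_left)
    moreover have "0 < p - 1"
      using prime_gt_1_nat[OF assms(1)] by simp
    ultimately show ?thesis
      unfolding even_period_le_twice_def using assms(2) by (intro exI[of _ "p - 1"]) simp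
  next
    case 2
    then have "int p dvd\<^sub>Z \<epsilon> ^ p - \<epsilon>'"
      using \<epsilon>_power_prime_cong[OF assms] by (simp add: \<epsilon>'_def)
    moreover have "\<epsilon> ^ (p + 1) - 1 = \<epsilon> * (\<epsilon> ^ p - \<epsilon>')"
      using \<epsilon>_mult_\<epsilon>' by (simp add: algebra_simps)
    ultimately have "int p dvd\<^sub>Z \<epsilon> ^ (p + 1) - 1"
      by (simp add: dvd_Z_mult_left)
    then show ?thesis
      unfolding even_period_le_twice_def using assms(2) prime_gt_1_nat[OF assms(1)]
      by (intro exI[of _ "p + 1"]) simp
  qed
qed

lemma even_period_le_twice_prime:
  assumes "prime p"
  shows "even_period_le_twice p"
proof -
  consider "p = 2" | "int p dvd D" | "odd p" "\<not> int p dvd D"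
    using prime_odd_nat[OF assms] prime_ge_2_nat[OF assms] by force
  then show ?thesis
    using even_period_le_twice_two even_period_le_twice_prime_dvd even_period_le_twice_odd_prime assms
    by cases auto
qed

lemma even_period_le_twice_prime_power:
  assumes "prime p" and "k > 0"
  shows "even_period_le_twice (p ^ k)"
proof -
  obtain Q where Q: "0 < Q" "even Q" "Q \<le> 2 * p" "int p dvd\<^sub>Z \<epsilon> ^ Q - 1"
    using even_period_le_twice_prime[OF assms(1)] unfolding even_period_le_twice_def by blast
  have "Q * p ^ (k - 1) \<le> 2 * p * p ^ (k - 1)"
    using Q(3) by (rule mult_right_mono) simp
  also have "\<dots> = 2 * p ^ k"
    using power_minus_mult[OF assms(2), of p] by (simp add: ac_simps)
  finally have "Q * p ^ (k - 1) \<le> 2 * p ^ k" .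
  moreover have "int p ^ (k - 1 + 1) dvd\<^sub>Z (\<epsilon> ^ Q) ^ (p ^ (k - 1)) - 1"
    using Q(4) by (intro dvd_Z_power_lift_iter) simp_all
  then have "int (p ^ k) dvd\<^sub>Z \<epsilon> ^ (Q * p ^ (k - 1)) - 1"
    using assms(2) by (simp add: power_mult)
  ultimately show ?thesis
    unfolding even_period_le_twice_def using Q(1,2) prime_gt_0_nat[OF assms(1)]
    by (intro exI[of _ "Q * p ^ (k - 1)"]) simp
qed

lemma even_period_le_twice_mult:
  assumes "coprime a b" and "even_period_le_twice a" and "even_period_le_twice b"
  shows "even_period_le_twice (a * b)"
proof -
  obtain P1 where P1: "0 < P1" "even P1" "P1 \<le> 2 * a" "int a dvd\<^sub>Z \<epsilon> ^ P1 - 1"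
    using assms(2) unfolding even_period_le_twice_def by blast
  obtain P2 where P2: "0 < P2" "even P2" "P2 \<le> 2 * b" "int b dvd\<^sub>Z \<epsilon> ^ P2 - 1"
    using assms(3) unfolding even_period_le_twice_def by blast
  define P where "P = lcm P1 P2"
  have "int a dvd\<^sub>Z (\<epsilon> ^ P1) ^ (P div P1) - 1" and "int b dvd\<^sub>Z (\<epsilon> ^ P2) ^ (P div P2) - 1"
    using P1(4) P2(4) by (simp_all add: dvd_Z_power_sub_one)
  then have "int a dvd\<^sub>Z \<epsilon> ^ P - 1" and "int b dvd\<^sub>Z \<epsilon> ^ P - 1"
    unfolding P_def by (simp_all flip: power_mult)
  then have "int (a * b) dvd\<^sub>Z \<epsilon> ^ P - 1"
    using assms(1) by (simp add: dvd_Z_mult_coprime)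
  moreover have "2 * P \<le> 2 * a * (2 * b)"
    unfolding P_def using lcm_even_le[OF P1(2) P2(2)] mult_le_mono[OF P1(3) P2(3)] by linarith
  moreover have "0 < P" "even P"
    unfolding P_def using P1(1,2) P2(1) by (simp_all add: lcm_pos_nat dvd_lcmI1)
  ultimately show ?thesis
    unfolding even_period_le_twice_def by (intro exI[of _ P]) simp
qed

lemma even_period_le_twice:
  assumes "n > 0"
  shows "even_period_le_twice n"
  using assms
proof (induction n rule: prime_power_coprime_induct)
  case one
  then show ?case by (rule even_period_le_twice_one)
next
  case (prime_power p k)
  then show ?case by (rule even_period_le_twice_prime_power)
next
  case (coprime a b)
  then show ?case by (rule even_period_le_twice_mult)
qed

lemma zsqrt_pell_tu: "zsqrt (pell_tu D t1 u1 k) = \<epsilon> powi k"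
proof (cases "k \<ge> 0")
  case True
  then show ?thesis
    by (simp add: pell_tu_def zsqrt_qpow_nat \<epsilon>_def power_int_def)
next
  case False
  have "inverse \<epsilon> = \<epsilon>'"
    using \<epsilon>_mult_\<epsilon>' by (rule inverse_unique)
  then show ?thesis
    using False by (simp add: pell_tu_def zsqrt_qpow_nat \<epsilon>'_def power_int_def)
qed

lemma pell_tu_shift_cong:
  assumes "n dvd\<^sub>Z \<epsilon> ^ P - 1"
  shows "[fst (pell_tu D t1 u1 (k + int P)) = fst (pell_tu D t1 u1 k)] (mod n) \<and>
         [snd (pell_tu D t1 u1 (k + int P)) = snd (pell_tu D t1 u1 k)] (mod n)"
proof -
  obtain a b c d where ab: "pell_tu D t1 u1 (k + int P) = (a, b)" and cd: "pell_tu D t1 u1 k = (c, d)"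
    by (metis surj_pair)
  have "\<epsilon> \<noteq> 0"
    using \<epsilon>_mult_\<epsilon>' by auto
  then have "\<epsilon> powi (k + int P) = \<epsilon> powi k * \<epsilon> ^ P"
    by (simp add: power_int_add)
  then have "zsqrt (a, b) - zsqrt (c, d) = \<epsilon> powi k * (\<epsilon> ^ P - 1)"
    using zsqrt_pell_tu[of "k + int P"] zsqrt_pell_tu[of k] unfolding ab cd
    by (simp add: right_diff_distrib)
  then have "zsqrt (a - c, b - d) = \<epsilon> powi k * (\<epsilon> ^ P - 1)"
    by (simp add: zsqrt_diff)
  moreover have "\<epsilon> powi k \<in> Z_sqrtD"
    unfolding Z_sqrtD_def by (metis rangeI zsqrt_pell_tu)
  ultimately have "n dvd\<^sub>Z zsqrt (a - c, b - d)"
    using assms by (simp add: dvd_Z_mult_left)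
  then show ?thesis
    unfolding ab cd by (simp add: dvd_Z_zsqrt_iff cong_iff_dvd_diff)
qed

lemma pell_period_le_twice:
  assumes "m > 0"
  shows "pell_period D t1 u1 m \<le> 2 * nat m"
proof -
  obtain P where P: "0 < P" "P \<le> 2 * nat m" "m dvd\<^sub>Z \<epsilon> ^ P - 1"
    using even_period_le_twice[of "nat m"] assms unfolding even_period_le_twice_def by auto
  then have "pell_period D t1 u1 m \<le> P"
    unfolding pell_period_def using pell_tu_shift_cong by (intro Least_le) blast
  with P(2) show ?thesis
    by simp
qed

end

lemma plog_nonneg: "plog x \<ge> 0"
  unfolding plog_def by simp

theorem mainTheorem15:
  fixes D t1 u1 m :: int
  assumes "D > 0"
    and "\<not> (\<exists>r::int. D = r ^ 2)"
    and "t1 > 0" and "u1 > 0" and "t1 ^ 2 - D * u1 ^ 2 = 1"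
    and "\<forall>t u::int. t > 0 \<and> u > 0 \<and> t ^ 2 - D * u ^ 2 = 1 \<longrightarrow> t1 \<le> t"
    and "m > 0"
  shows "real (pell_period D t1 u1 m) \<le> 2 * real_of_int m * (plog (real_of_int m) + 1)"
proof -
  interpret pell_unit D t1 u1
    using assms by unfold_locales auto
  have "real (pell_period D t1 u1 m) \<le> 2 * real_of_int m"
    using pell_period_le_twice[OF assms(7)] assms(7) by linarith
  also have "\<dots> \<le> 2 * real_of_int m * (plog (real_of_int m) + 1)"
    using assms(7) plog_nonneg[of "real_of_int m"] by simp
  finally show ?thesis .
qed

end
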